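(* Let $\alpha>-1$ and $\beta>0$ be fixed. For every bounded continuous $\Phi:[0,\infty)\to\mathbb{R}$, $\mathcal{R}_{\eta}^{(\alpha,\beta)}(\Phi;x)\to\Phi(x)$ as $\eta\to\infty$, uniformly in $x$ on every compact subset of $[0,\infty)$.
   Context: The generalized Laguerre polynomials are $\mathcal{L}_k^{(\alpha)}(t)=\sum_{i=0}^{k}\frac{(-1)^i}{i!}\binom{k+\alpha}{k-i}t^i$. Put $p_{\eta,k}(x)=e^{-\eta x/2}2^{-\alpha-1}2^{-k}\mathcal{L}_k^{(\alpha)}(-\eta x/2)$ and, for $k\ge1$, $z>0$, $\mathcal{I}_{k,\eta}^{\beta}(z)=\frac{\eta\beta e^{-\eta\beta z}(\eta\beta z)^{k\beta-1}}{\Gamma(k\beta)}$. The operator is $\mathcal{R}_{\eta}^{(\alpha,\beta)}(\Phi;x)=p_{\eta,0}(x)\Phi(0)+\sum_{k=1}^{\infty}p_{\eta,k}(x)\int_0^\infty\mathcal{I}_{k,\eta}^{\beta}(z)\Phi(z)\,dz$, $\eta>0$. *)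

theory Defs
  imports "HOL-Analysis.Analysis"
begin

definition laguerre :: "real \<Rightarrow> nat \<Rightarrow> real \<Rightarrow> real" where
  "laguerre \<alpha> k t = (\<Sum>i\<le>k. ((-1) ^ i / fact i) * ((real k + \<alpha>) gchoose (k - i)) * t ^ i)"

definition p_basis :: "real \<Rightarrow> real \<Rightarrow> nat \<Rightarrow> real \<Rightarrow> real" where
  "p_basis \<alpha> \<eta> k x = exp (- \<eta> * x / 2) * 2 powr (- \<alpha> - 1) * 2 powr (- real k)
      * laguerre \<alpha> k (- \<eta> * x / 2)"

definition I_kernel :: "real \<Rightarrow> real \<Rightarrow> nat \<Rightarrow> real \<Rightarrow> real" where
  "I_kernel \<beta> \<eta> k z = \<eta> * \<beta> * exp (- \<eta> * \<beta> * z) * (\<eta> * \<beta> * z) powr (real k * \<beta> - 1)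
      / Gamma (real k * \<beta>)"

definition R_op :: "real \<Rightarrow> real \<Rightarrow> real \<Rightarrow> (real \<Rightarrow> real) \<Rightarrow> real \<Rightarrow> real" where
  "R_op \<alpha> \<beta> \<eta> \<Phi> x = p_basis \<alpha> \<eta> 0 x * \<Phi> 0
      + (\<Sum>k. p_basis \<alpha> \<eta> (Suc k) x
              * (LINT z:{0<..}|lborel. I_kernel \<beta> \<eta> (Suc k) z * \<Phi> z))"

end

theory Submission
  imports Defs
begin

text \<open>For fixed \<open>x \<ge> 0\<close> the coefficients \<open>p_basis \<alpha> \<eta> k x\<close> are the law of \<open>I + J\<close>, where
  \<open>I\<close> is Poisson with mean \<open>\<eta>x/2\<close> and, given \<open>I\<close>, \<open>J\<close> is negative binomial of order \<open>I + \<alpha> + 1\<close>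
  and parameter \<open>1/2\<close>; conditioning on \<open>I\<close> yields its first two moments. The kernel
  \<open>I_kernel \<beta> \<eta> k\<close> is the Gamma density of shape \<open>k\<beta>\<close> and rate \<open>\<eta>\<beta>\<close>, with mean \<open>k/\<eta>\<close> and
  variance \<open>k/(\<beta>\<eta>\<^sup>2)\<close>. So \<open>R_op\<close> averages \<open>\<Phi>\<close> against a probability measure whose second
  moment about \<open>x\<close> is \<open>O(1/\<eta>)\<close> uniformly for bounded \<open>x\<close>, and Korovkin's estimate
  \<open>\<bar>\<Phi> z - \<Phi> x\<bar> \<le> \<epsilon> + C (z - x)\<^sup>2\<close> gives the uniform convergence.\<close>

definition poisson_weight :: "real \<Rightarrow> nat \<Rightarrow> real" where
  "poisson_weight l i = exp (- l) * l ^ i / fact i"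

definition negbin_weight :: "real \<Rightarrow> nat \<Rightarrow> real" where
  "negbin_weight r j = 2 powr (- r) * ((real j + r - 1) gchoose j) / 2 ^ j"

lemma poisson_weight_nonneg: "l \<ge> 0 \<Longrightarrow> poisson_weight l i \<ge> 0"
  by (simp add: poisson_weight_def)

lemma negbin_weight_nonneg:
  assumes "r > 0" shows "negbin_weight r j \<ge> 0"
proof -
  have "(real j + r - 1) gchoose j = pochhammer r j / fact j"
    by (simp add: gbinomial_pochhammer')
  with pochhammer_pos[OF assms, of j] show ?thesis
    by (simp add: negbin_weight_def)
qed

lemma poisson_weight_sums: "poisson_weight l sums 1"
proof -
  have "(\<lambda>i. exp (- l) * (l ^ i /\<^sub>R fact i)) sums (exp (- l) * exp l)"
    by (intro sums_mult exp_converges)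
  then show ?thesis
    unfolding poisson_weight_def by (simp add: exp_minus field_simps)
qed

lemma negbin_weight_sums: "negbin_weight r sums 1"
proof -
  have "(\<lambda>j. (- r gchoose j) * (- 1 / 2) ^ j) sums (1 + - 1 / 2) powr (- r)"
    by (rule gen_binomial_real) simp
  then have "(\<lambda>j. 2 powr (- r) * ((- r gchoose j) * (- 1 / 2) ^ j)) sums (2 powr (- r) * 2 powr r)"
    by (intro sums_mult) (simp add: powr_minus_divide powr_divide)
  moreover have "(- r gchoose j) * (- 1 / 2) ^ j = (real j + r - 1 gchoose j) / 2 ^ j" for j
  proof -
    have "(- 1) ^ j * (- 1 / 2) ^ j = (1 / 2 :: real) ^ j"
      by (simp flip: power_mult_distrib)
    then show ?thesis
      by (simp add: gbinomial_minus) (simp add: field_simps)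
  qed
  ultimately show ?thesis
    unfolding negbin_weight_def by (simp add: powr_add [symmetric])
qed

lemma poisson_weight_absorb:
  "real (Suc i) * poisson_weight l (Suc i) = l * poisson_weight l i"
  by (simp add: poisson_weight_def del: of_nat_Suc)

lemma negbin_weight_absorb:
  "real (Suc j) * negbin_weight r (Suc j) = r * negbin_weight (r + 1) j"
proof -
  have "real (Suc j) * (real (Suc j) + r - 1 gchoose Suc j) = (real j + r) * (real j + r - 1 gchoose j)"
    using gbinomial_absorption[of j "real j + r"] by (simp add: algebra_simps)
  also have "\<dots> = r * (real j + r gchoose j)"
    using gbinomial_absorb_comp[of "real j + r" j] by simp
  finally show ?thesis
    by (simp add: negbin_weight_def powr_diff powr_minus field_simps)
qed

lemma sums_mean_of_absorb:
  fixes w v :: "nat \<Rightarrow> real"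
  assumes absorb: "\<And>j. real (Suc j) * w (Suc j) = c * v j" and "v sums 1"
  shows "(\<lambda>j. real j * w j) sums c"
proof -
  have "(\<lambda>j. c * v j) sums (c * 1)"
    by (intro sums_mult assms)
  then have "(\<lambda>j. real (Suc j) * w (Suc j)) sums c"
    by (simp only: absorb mult_1_right)
  then show ?thesis
    using sums_Suc_iff [of "\<lambda>j. real j * w j" c] by simp
qed

lemma sums_second_moment_of_absorb:
  fixes w v :: "nat \<Rightarrow> real"
  assumes absorb: "\<And>j. real (Suc j) * w (Suc j) = c * v j"
    and "v sums 1" and "(\<lambda>j. real j * v j) sums \<mu>"
  shows "(\<lambda>j. real j ^ 2 * w j) sums (c * (\<mu> + 1))"
proof -
  have "(\<lambda>j. c * (real j * v j + v j)) sums (c * (\<mu> + 1))"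
    by (intro sums_mult sums_add assms)
  moreover have "c * (real j * v j + v j) = real (Suc j) ^ 2 * w (Suc j)" for j
  proof -
    have "real (Suc j) ^ 2 * w (Suc j) = real (Suc j) * (c * v j)"
      by (simp only: power2_eq_square mult.assoc absorb)
    then show ?thesis
      by (simp add: algebra_simps)
  qed
  ultimately show ?thesis
    using sums_Suc_iff [of "\<lambda>j. real j ^ 2 * w j" "c * (\<mu> + 1)"] by simp
qed

lemma poisson_weight_mean: "(\<lambda>i. real i * poisson_weight l i) sums l"
  by (rule sums_mean_of_absorb [OF poisson_weight_absorb poisson_weight_sums])

lemma poisson_weight_second_moment: "(\<lambda>i. real i ^ 2 * poisson_weight l i) sums (l * (l + 1))"
  by (rule sums_second_moment_of_absorb
      [OF poisson_weight_absorb poisson_weight_sums poisson_weight_mean])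

lemma negbin_weight_mean: "(\<lambda>j. real j * negbin_weight r j) sums r"
  by (rule sums_mean_of_absorb [OF negbin_weight_absorb negbin_weight_sums])

lemma negbin_weight_second_moment:
  "(\<lambda>j. real j ^ 2 * negbin_weight r j) sums (r * (r + 2))"
  using sums_second_moment_of_absorb
      [OF negbin_weight_absorb negbin_weight_sums negbin_weight_mean, of r]
  by (simp add: add.assoc)

lemma sums_diagonal_nonneg:
  fixes h :: "nat \<Rightarrow> nat \<Rightarrow> real"
  assumes nonneg: "\<And>i j. h i j \<ge> 0" and rows: "\<And>i. h i sums s i" and "s sums S"
  shows "(\<lambda>k. \<Sum>i\<le>k. h i (k - i)) sums S"
proof -
  have rows': "((\<lambda>j. case (i, j) of (i, j) \<Rightarrow> h i j) has_sum s i) UNIV" for i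
    using sums_nonneg_imp_has_sum [OF rows nonneg] by simp
  have "s i \<ge> 0" for i
    using rows' [of i] by (rule has_sum_nonneg) (auto intro: nonneg)
  then have S: "(s has_sum S) UNIV"
    by (rule sums_nonneg_imp_has_sum [OF \<open>s sums S\<close>])
  have "(\<lambda>(i, j). h i j) summable_on UNIV \<times> UNIV"
    by (rule summable_on_SigmaI [OF rows' has_sum_imp_summable [OF S]]) (auto intro: nonneg)
  then have "((\<lambda>(i, j). h i j) has_sum S) (UNIV \<times> UNIV)"
    by (rule has_sum_SigmaI [OF rows' S])
  also have "?this \<longleftrightarrow> ((\<lambda>(k, i). h i (k - i)) has_sum S) (SIGMA k:UNIV. {..k})"
    by (rule has_sum_reindex_bij_witness [where j = "\<lambda>(k, i). (i, k - i)" and i = "\<lambda>(i, j). (i + j, i)",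
          symmetric]) auto
  finally have "((\<lambda>k. \<Sum>i\<le>k. h i (k - i)) has_sum S) UNIV"
    by (rule has_sum_Sigma') (simp add: has_sum_finite)
  then show ?thesis
    by (rule has_sum_imp_sums)
qed

lemma p_basis_eq_poisson_negbin:
  "p_basis \<alpha> \<eta> k x =
     (\<Sum>i\<le>k. poisson_weight (\<eta> * x / 2) i * negbin_weight (real i + \<alpha> + 1) (k - i))"
  unfolding p_basis_def laguerre_def sum_distrib_left
proof (rule sum.cong [OF refl])
  fix i assume "i \<in> {..k}"
  then have ik: "i \<le> k" by simp
  have sign: "(- 1) ^ i * (- \<eta> * x / 2) ^ i = (\<eta> * x / 2) ^ i"
    by (simp flip: power_mult_distrib)
  have "2 powr (- (real i + \<alpha> + 1)) / 2 ^ (k - i) = 2 powr (- (real i + \<alpha> + 1) - real (k - i))"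
    by (simp add: powr_diff powr_realpow)
  also have "- (real i + \<alpha> + 1) - real (k - i) = (- \<alpha> - 1) + (- real k)"
    using ik by (simp add: of_nat_diff)
  also have "2 powr \<dots> = 2 powr (- \<alpha> - 1) * 2 powr (- real k)"
    by (rule powr_add)
  finally have pow2: "2 powr (- (real i + \<alpha> + 1)) / 2 ^ (k - i) = 2 powr (- \<alpha> - 1) * 2 powr (- real k)" .
  have binom: "real (k - i) + (real i + \<alpha> + 1) - 1 = real k + \<alpha>"
    using ik by (simp add: of_nat_diff)
  show "exp (- \<eta> * x / 2) * 2 powr (- \<alpha> - 1) * 2 powr (- real k) *
      ((- 1) ^ i / fact i * (real k + \<alpha> gchoose (k - i)) * (- \<eta> * x / 2) ^ i) =
    poisson_weight (\<eta> * x / 2) i * negbin_weight (real i + \<alpha> + 1) (k - i)"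
    unfolding poisson_weight_def negbin_weight_def binom
    using pow2 sign by (simp add: field_simps)
qed

lemma p_basis_nonneg:
  assumes "\<alpha> > -1" and "\<eta> * x \<ge> 0"
  shows "p_basis \<alpha> \<eta> k x \<ge> 0"
  unfolding p_basis_eq_poisson_negbin
  using assms by (intro sum_nonneg mult_nonneg_nonneg poisson_weight_nonneg negbin_weight_nonneg) auto

lemma p_basis_sums_mixture:
  assumes "\<alpha> > -1" and "\<eta> * x \<ge> 0" and "\<And>k. g k \<ge> 0"
    and inner: "\<And>i. (\<lambda>j. negbin_weight (real i + \<alpha> + 1) j * g (i + j)) sums t i"
    and outer: "(\<lambda>i. poisson_weight (\<eta> * x / 2) i * t i) sums T"
  shows "(\<lambda>k. p_basis \<alpha> \<eta> k x * g k) sums T"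
proof -
  define h where
    "h i j = poisson_weight (\<eta> * x / 2) i * (negbin_weight (real i + \<alpha> + 1) j * g (i + j))" for i j
  have "(\<lambda>k. \<Sum>i\<le>k. h i (k - i)) sums T"
  proof (rule sums_diagonal_nonneg [OF _ _ outer])
    show "h i j \<ge> 0" for i j
      using assms unfolding h_def
      by (intro mult_nonneg_nonneg poisson_weight_nonneg negbin_weight_nonneg) auto
    show "h i sums (poisson_weight (\<eta> * x / 2) i * t i)" for i
      unfolding h_def by (intro sums_mult inner)
  qed
  moreover have "(\<Sum>i\<le>k. h i (k - i)) = p_basis \<alpha> \<eta> k x * g k" for k
    unfolding p_basis_eq_poisson_negbin sum_distrib_right h_def
    by (intro sum.cong) auto
  ultimately show ?thesis
    by simp
qed

lemma p_basis_sums_one: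
  assumes "\<alpha> > -1" and "\<eta> * x \<ge> 0"
  shows "(\<lambda>k. p_basis \<alpha> \<eta> k x) sums 1"
  using p_basis_sums_mixture [OF assms, of "\<lambda>_. 1" "\<lambda>_. 1"]
  by (simp add: negbin_weight_sums poisson_weight_sums)

lemma p_basis_mean:
  assumes "\<alpha> > -1" and "\<eta> * x \<ge> 0"
  shows "(\<lambda>k. p_basis \<alpha> \<eta> k x * real k) sums (\<eta> * x + \<alpha> + 1)"
proof (rule p_basis_sums_mixture [OF assms])
  fix i
  have "(\<lambda>j. real i * negbin_weight (real i + \<alpha> + 1) j + real j * negbin_weight (real i + \<alpha> + 1) j)
      sums (real i * 1 + (real i + \<alpha> + 1))"
    by (intro sums_add sums_mult negbin_weight_sums negbin_weight_mean)
  then show "(\<lambda>j. negbin_weight (real i + \<alpha> + 1) j * real (i + j)) sums (2 * real i + \<alpha> + 1)"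
    by (simp add: algebra_simps)
next
  have "(\<lambda>i. 2 * (real i * poisson_weight (\<eta> * x / 2) i) + (\<alpha> + 1) * poisson_weight (\<eta> * x / 2) i)
      sums (2 * (\<eta> * x / 2) + (\<alpha> + 1) * 1)"
    by (intro sums_add sums_mult poisson_weight_sums poisson_weight_mean)
  then show "(\<lambda>i. poisson_weight (\<eta> * x / 2) i * (2 * real i + \<alpha> + 1)) sums (\<eta> * x + \<alpha> + 1)"
    by (simp add: algebra_simps)
qed simp

lemma p_basis_second_moment:
  assumes "\<alpha> > -1" and "\<eta> * x \<ge> 0"
  shows "(\<lambda>k. p_basis \<alpha> \<eta> k x * real k ^ 2) sums
           ((\<eta> * x) ^ 2 + (2 * \<alpha> + 5) * (\<eta> * x) + (\<alpha> + 1) * (\<alpha> + 3))"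
proof (rule p_basis_sums_mixture [OF assms])
  fix i
  define r where "r = real i + \<alpha> + 1"
  have "(\<lambda>j. real i ^ 2 * negbin_weight r j + 2 * real i * (real j * negbin_weight r j)
            + real j ^ 2 * negbin_weight r j)
      sums (real i ^ 2 * 1 + 2 * real i * r + r * (r + 2))"
    by (intro sums_add sums_mult negbin_weight_sums negbin_weight_mean negbin_weight_second_moment)
  then show "(\<lambda>j. negbin_weight r j * real (i + j) ^ 2) sums
      (4 * real i ^ 2 + (4 * \<alpha> + 6) * real i + (\<alpha> + 1) * (\<alpha> + 3))"
    by (simp add: r_def power2_eq_square algebra_simps)
next
  define l where "l = \<eta> * x / 2"
  have "(\<lambda>i. 4 * (real i ^ 2 * poisson_weight l i) + (4 * \<alpha> + 6) * (real i * poisson_weight l i)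
            + (\<alpha> + 1) * (\<alpha> + 3) * poisson_weight l i)
      sums (4 * (l * (l + 1)) + (4 * \<alpha> + 6) * l + (\<alpha> + 1) * (\<alpha> + 3) * 1)"
    by (intro sums_add sums_mult poisson_weight_sums poisson_weight_mean poisson_weight_second_moment)
  then show "(\<lambda>i. poisson_weight l i * (4 * real i ^ 2 + (4 * \<alpha> + 6) * real i + (\<alpha> + 1) * (\<alpha> + 3)))
      sums ((\<eta> * x) ^ 2 + (2 * \<alpha> + 5) * (\<eta> * x) + (\<alpha> + 1) * (\<alpha> + 3))"
    by (simp add: l_def power2_eq_square algebra_simps)
qed simp

lemma has_bochner_integral_gamma_density:
  fixes c \<sigma> :: real
  assumes "c > 0" and "\<sigma> > 0"
  shows "has_bochner_integral lborel
           (\<lambda>t. indicator {0<..} t * (c * t) powr (\<sigma> - 1) * exp (- (c * t))) (Gamma \<sigma> / c)"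
proof -
  define f where "f t = indicator {0<..} t * (c * t) powr (\<sigma> - 1) * exp (- (c * t))" for t :: real
  have [measurable]: "f \<in> borel_measurable borel"
    unfolding f_def by measurable
  have "f (0 + 1 / c * t) = indicator {0..} t * t powr (\<sigma> - 1) / exp t" for t
    using assms by (auto simp: f_def indicator_def exp_minus field_simps)
  then have "(\<integral>\<^sup>+t. ennreal (f t) \<partial>lborel) = ennreal (1 / c) * ennreal (Gamma \<sigma>)"
    using nn_integral_real_affine [of "\<lambda>t. ennreal (f t)" "1 / c" 0] assms
    by (simp add: Gamma_conv_nn_integral_real)
  also have "\<dots> = ennreal (Gamma \<sigma> / c)"
    using assms by (simp add: ennreal_mult [symmetric])
  finally show ?thesis
    using assms unfolding f_def
    by (intro has_bochner_integral_nn_integral) (auto intro!: AE_I2 simp: indicator_def)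
qed

lemma I_kernel_moment:
  assumes "\<eta> > 0" and "\<beta> > 0" and "k > 0"
  shows "has_bochner_integral lborel (\<lambda>z. indicator {0<..} z * I_kernel \<beta> \<eta> k z * z ^ m)
           (Gamma (real k * \<beta> + real m) / (Gamma (real k * \<beta>) * (\<eta> * \<beta>) ^ m))"
proof -
  define c where "c = \<eta> * \<beta>"
  define s where "s = real k * \<beta>"
  have c: "c > 0" and s: "s > 0"
    using assms by (simp_all add: c_def s_def)
  have "has_bochner_integral lborel
      (\<lambda>z. c / (Gamma s * c ^ m) * (indicator {0<..} z * (c * z) powr (s + real m - 1) * exp (- (c * z))))
      (c / (Gamma s * c ^ m) * (Gamma (s + real m) / c))"
    using c s by (intro has_bochner_integral_mult_right has_bochner_integral_gamma_density) auto
  moreover have "c / (Gamma s * c ^ m) * (indicator {0<..} z * (c * z) powr (s + real m - 1) * exp (- (c * z)))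
      = indicator {0<..} z * I_kernel \<beta> \<eta> k z * z ^ m" for z
  proof (cases "z > 0")
    case True
    have "(c * z) powr (s + real m - 1) = (c * z) powr (s - 1) * (c * z) powr real m"
      by (simp add: powr_add [symmetric] algebra_simps)
    then have "(c * z) powr (s + real m - 1) = (c * z) powr (s - 1) * (c * z) ^ m"
      using True c by (simp add: powr_realpow)
    then show ?thesis
      using True c s unfolding I_kernel_def c_def [symmetric] s_def [symmetric]
      by (simp add: power_mult_distrib field_simps) (simp add: c_def)
  qed simp
  moreover have "c / (Gamma s * c ^ m) * (Gamma (s + real m) / c) = Gamma (s + real m) / (Gamma s * c ^ m)"
    using c by simp
  ultimately show ?thesis
    by (simp only: c_def s_def)
qed

lemma I_kernel_integral:
  assumes "\<eta> > 0" and "\<beta> > 0" and "k > 0"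
  shows "has_bochner_integral lborel (\<lambda>z. indicator {0<..} z * I_kernel \<beta> \<eta> k z) 1"
proof -
  have "Gamma (real k * \<beta>) > 0"
    using assms by simp
  then show ?thesis
    using I_kernel_moment [OF assms, of 0] by simp
qed

lemma I_kernel_second_moment_about:
  assumes "\<eta> > 0" and "\<beta> > 0" and "k > 0"
  shows "has_bochner_integral lborel (\<lambda>z. indicator {0<..} z * I_kernel \<beta> \<eta> k z * (z - x) ^ 2)
           ((real k / \<eta> - x) ^ 2 + real k / (\<beta> * \<eta> ^ 2))"
proof -
  define s where "s = real k * \<beta>"
  have s: "s > 0" and Gs: "Gamma s > 0"
    using assms by (simp_all add: s_def)
  have G1: "Gamma (s + 1) = s * Gamma s"
    using s by (intro Gamma_plus1) (auto simp: nonpos_Ints_def)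
  have G2: "Gamma (s + 2) = (s + 1) * (s * Gamma s)"
    using Gamma_plus1 [of "s + 1"] s G1 by (auto simp: nonpos_Ints_def add.assoc)
  note moment = I_kernel_moment [OF assms, folded s_def]
  have integral: "has_bochner_integral lborel
      (\<lambda>z. indicator {0<..} z * I_kernel \<beta> \<eta> k z * z ^ 2
           - 2 * x * (indicator {0<..} z * I_kernel \<beta> \<eta> k z * z ^ 1)
           + x ^ 2 * (indicator {0<..} z * I_kernel \<beta> \<eta> k z * z ^ 0))
      (Gamma (s + real 2) / (Gamma s * (\<eta> * \<beta>) ^ 2)
           - 2 * x * (Gamma (s + real 1) / (Gamma s * (\<eta> * \<beta>) ^ 1))
           + x ^ 2 * (Gamma (s + real 0) / (Gamma s * (\<eta> * \<beta>) ^ 0)))"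
    (is "has_bochner_integral _ ?g ?v")
    by (intro has_bochner_integral_add has_bochner_integral_diff has_bochner_integral_mult_right moment)
  have "?v = (s / (\<eta> * \<beta>) - x) ^ 2 + s / (\<eta> * \<beta>) ^ 2"
    using G1 G2 Gs assms by (simp add: field_simps power2_eq_square)
  also have "\<dots> = (real k / \<eta> - x) ^ 2 + real k / (\<beta> * \<eta> ^ 2)"
    using assms by (simp add: s_def power2_eq_square)
  finally have v_eq: "?v = (real k / \<eta> - x) ^ 2 + real k / (\<beta> * \<eta> ^ 2)" .
  have g_eq: "?g = (\<lambda>z. indicator {0<..} z * I_kernel \<beta> \<eta> k z * (z - x) ^ 2)"
    by (simp add: fun_eq_iff power2_eq_square algebra_simps)
  from integral show ?thesis
    unfolding v_eq g_eq .
qed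

lemma integral_weighted_deviation_le:
  fixes w f q :: "'a::euclidean_space \<Rightarrow> real"
  assumes "has_bochner_integral M w 1" and "has_bochner_integral M (\<lambda>z. w z * q z) Q"
    and "integrable M (\<lambda>z. w z * f z)"
    and dev: "\<And>z. z \<in> space M \<Longrightarrow> \<bar>w z * (f z - c)\<bar> \<le> w z * (\<epsilon> + C * q z)"
  shows "\<bar>(\<integral>z. w z * f z \<partial>M) - c\<bar> \<le> \<epsilon> + C * Q"
proof -
  have diff: "has_bochner_integral M (\<lambda>z. w z * f z - c * w z) ((\<integral>z. w z * f z \<partial>M) - c * 1)"
    using assms by (intro has_bochner_integral_diff has_bochner_integral_mult_right
        has_bochner_integral_integrable)
  have bound: "has_bochner_integral M (\<lambda>z. \<epsilon> * w z + C * (w z * q z)) (\<epsilon> * 1 + C * Q)"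
    using assms by (intro has_bochner_integral_add has_bochner_integral_mult_right)
  have "\<bar>\<integral>z. w z * f z - c * w z \<partial>M\<bar> \<le> (\<integral>z. \<epsilon> * w z + C * (w z * q z) \<partial>M)"
    using diff bound dev
    by (intro integral_abs_bound_integral) (auto simp: has_bochner_integral_iff algebra_simps)
  then show ?thesis
    using diff bound by (simp add: has_bochner_integral_integral_eq)
qed

lemma suminf_weighted_deviation_le:
  fixes w f q :: "nat \<Rightarrow> real"
  assumes "w sums 1" and "(\<lambda>k. w k * q k) sums Q"
    and dev: "\<And>k. \<bar>w k * (f k - c)\<bar> \<le> w k * (\<epsilon> + C * q k)"
  shows "summable (\<lambda>k. w k * f k)" and "\<bar>(\<Sum>k. w k * f k) - c\<bar> \<le> \<epsilon> + C * Q"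
proof -
  have bound: "(\<lambda>k. w k * (\<epsilon> + C * q k)) sums (\<epsilon> + C * Q)"
    using sums_add [OF sums_mult [OF assms(1), of \<epsilon>] sums_mult [OF assms(2), of C]]
    by (simp add: algebra_simps)
  have abs_summable: "summable (\<lambda>k. \<bar>w k * (f k - c)\<bar>)"
    by (rule summable_rabs_comparison_test [OF _ sums_summable [OF bound]]) (use dev in auto)
  then have centered: "summable (\<lambda>k. w k * (f k - c))"
    by (rule summable_rabs_cancel)
  have "(\<lambda>k. w k * (f k - c) + c * w k) sums ((\<Sum>k. w k * (f k - c)) + c * 1)"
    by (intro sums_add sums_mult summable_sums centered assms(1))
  then have sums_f: "(\<lambda>k. w k * f k) sums ((\<Sum>k. w k * (f k - c)) + c)"
    by (simp add: algebra_simps)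
  then show "summable (\<lambda>k. w k * f k)"
    by (rule sums_summable)
  have "\<bar>\<Sum>k. w k * (f k - c)\<bar> \<le> (\<Sum>k. \<bar>w k * (f k - c)\<bar>)"
    by (rule summable_rabs [OF abs_summable])
  also have "\<dots> \<le> \<epsilon> + C * Q"
    using suminf_le [OF dev abs_summable sums_summable [OF bound]] bound by (simp add: sums_iff)
  finally show "\<bar>(\<Sum>k. w k * f k) - c\<bar> \<le> \<epsilon> + C * Q"
    using sums_f by (simp add: sums_iff)
qed

lemma I_kernel_nonneg:
  assumes "\<eta> > 0" and "\<beta> > 0" and "k > 0"
  shows "indicator {0<..} z * I_kernel \<beta> \<eta> k z \<ge> 0"
  using assms unfolding I_kernel_def by (auto simp: indicator_def)

lemma integrable_I_kernel_mult:
  assumes "\<eta> > 0" and "\<beta> > 0" and "k > 0" and "continuous_on {0..} \<Phi>"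
    and bounded: "\<And>z. z \<ge> 0 \<Longrightarrow> \<bar>\<Phi> z\<bar> \<le> B"
  shows "integrable lborel (\<lambda>z. indicator {0<..} z * I_kernel \<beta> \<eta> k z * \<Phi> z)"
proof -
  define w where "w z = indicator {0<..} z * I_kernel \<beta> \<eta> k z" for z :: real
  have "(\<lambda>z. indicator {0<..} z *\<^sub>R \<Phi> z) \<in> borel_measurable borel"
    using assms by (intro borel_measurable_continuous_on_indicator) (auto intro: continuous_on_subset)
  then have "(\<lambda>z. w z * (indicator {0<..} z *\<^sub>R \<Phi> z)) \<in> borel_measurable lborel"
    unfolding w_def I_kernel_def by measurable
  also have "(\<lambda>z. w z * (indicator {0<..} z *\<^sub>R \<Phi> z)) = (\<lambda>z. w z * \<Phi> z)"
    by (auto simp: w_def indicator_def)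
  finally have "integrable lborel (\<lambda>z. w z * \<Phi> z)"
  proof (rule Bochner_Integration.integrable_bound [rotated])
    show "integrable lborel (\<lambda>z. w z * B)"
      using I_kernel_integral [OF assms(1-3)] unfolding w_def by (auto simp: has_bochner_integral_iff)
    have "norm (w z * \<Phi> z) \<le> norm (w z * B)" for z
    proof (cases "z > 0")
      case True
      then have "\<bar>\<Phi> z\<bar> \<le> \<bar>B\<bar>"
        using bounded [of z] by simp
      then show ?thesis
        using I_kernel_nonneg [OF assms(1-3), of z] by (simp add: w_def abs_mult mult_left_mono)
    qed (simp add: w_def)
    then show "AE z in lborel. norm (w z * \<Phi> z) \<le> norm (w z * B)"
      by simp
  qed
  then show ?thesis
    by (simp add: w_def)
qed

lemma I_kernel_average_deviation:
  assumes "\<eta> > 0" and "\<beta> > 0" and "k > 0" and "continuous_on {0..} \<Phi>"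
    and "\<And>z. z \<ge> 0 \<Longrightarrow> \<bar>\<Phi> z\<bar> \<le> B"
    and dev: "\<And>z. z \<ge> 0 \<Longrightarrow> \<bar>\<Phi> z - \<Phi> x\<bar> \<le> \<epsilon> + C * (z - x) ^ 2"
  shows "\<bar>(LINT z:{0<..}|lborel. I_kernel \<beta> \<eta> k z * \<Phi> z) - \<Phi> x\<bar>
           \<le> \<epsilon> + C * ((real k / \<eta> - x) ^ 2 + real k / (\<beta> * \<eta> ^ 2))"
proof -
  define w where "w z = indicator {0<..} z * I_kernel \<beta> \<eta> k z" for z :: real
  have "\<bar>w z * (\<Phi> z - \<Phi> x)\<bar> \<le> w z * (\<epsilon> + C * (z - x) ^ 2)" for z
    using dev [of z] I_kernel_nonneg [OF assms(1-3), of z]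
    by (cases "z > 0") (auto simp: w_def abs_mult intro: mult_left_mono)
  then have "\<bar>(\<integral>z. w z * \<Phi> z \<partial>lborel) - \<Phi> x\<bar>
      \<le> \<epsilon> + C * ((real k / \<eta> - x) ^ 2 + real k / (\<beta> * \<eta> ^ 2))"
    using I_kernel_integral [OF assms(1-3)] I_kernel_second_moment_about [OF assms(1-3)]
      integrable_I_kernel_mult [OF assms(1-5)]
    by (intro integral_weighted_deviation_le) (auto simp: w_def)
  then show ?thesis
    by (simp add: set_lebesgue_integral_def w_def mult.assoc)
qed

lemma p_basis_second_moment_about:
  assumes "\<alpha> > -1" and "\<beta> > 0" and "\<eta> > 0" and "x \<ge> 0"
  shows "(\<lambda>k. p_basis \<alpha> \<eta> k x * ((real k / \<eta> - x) ^ 2 + real k / (\<beta> * \<eta> ^ 2))) sums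
           (3 * x / \<eta> + (\<alpha> + 1) * (\<alpha> + 3) / \<eta> ^ 2 + (\<eta> * x + \<alpha> + 1) / (\<beta> * \<eta> ^ 2))"
proof -
  have "\<eta> * x \<ge> 0"
    using assms by simp
  note moments = p_basis_sums_one [OF assms(1) this] p_basis_mean [OF assms(1) this]
    p_basis_second_moment [OF assms(1) this]
  have "(\<lambda>k. 1 / \<eta> ^ 2 * (p_basis \<alpha> \<eta> k x * real k ^ 2)
            + (1 / (\<beta> * \<eta> ^ 2) - 2 * x / \<eta>) * (p_basis \<alpha> \<eta> k x * real k)
            + x ^ 2 * p_basis \<alpha> \<eta> k x)
      sums (1 / \<eta> ^ 2 * ((\<eta> * x) ^ 2 + (2 * \<alpha> + 5) * (\<eta> * x) + (\<alpha> + 1) * (\<alpha> + 3))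
            + (1 / (\<beta> * \<eta> ^ 2) - 2 * x / \<eta>) * (\<eta> * x + \<alpha> + 1) + x ^ 2 * 1)"
    by (intro sums_add sums_mult moments)
  then show ?thesis
    using assms by (simp add: field_simps power2_eq_square)
qed

lemma R_op_deviation:
  assumes "\<alpha> > -1" and "\<beta> > 0" and "\<eta> > 0" and "x \<ge> 0" and "continuous_on {0..} \<Phi>"
    and "\<And>z. z \<ge> 0 \<Longrightarrow> \<bar>\<Phi> z\<bar> \<le> B"
    and dev: "\<And>z. z \<ge> 0 \<Longrightarrow> \<bar>\<Phi> z - \<Phi> x\<bar> \<le> \<epsilon> + C * (z - x) ^ 2"
  shows "\<bar>R_op \<alpha> \<beta> \<eta> \<Phi> x - \<Phi> x\<bar>
           \<le> \<epsilon> + C * (3 * x / \<eta> + (\<alpha> + 1) * (\<alpha> + 3) / \<eta> ^ 2 + (\<eta> * x + \<alpha> + 1) / (\<beta> * \<eta> ^ 2))"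
proof -
  define f where
    "f k = (if k = 0 then \<Phi> 0 else LINT z:{0<..}|lborel. I_kernel \<beta> \<eta> k z * \<Phi> z)" for k
  have "\<bar>p_basis \<alpha> \<eta> k x * (f k - \<Phi> x)\<bar>
      \<le> p_basis \<alpha> \<eta> k x * (\<epsilon> + C * ((real k / \<eta> - x) ^ 2 + real k / (\<beta> * \<eta> ^ 2)))" for k
  proof -
    have "\<bar>f k - \<Phi> x\<bar> \<le> \<epsilon> + C * ((real k / \<eta> - x) ^ 2 + real k / (\<beta> * \<eta> ^ 2))"
      using dev [of 0] I_kernel_average_deviation [OF assms(3,2) _ assms(5-7), of k]
      by (cases "k = 0") (simp_all add: f_def)
    moreover have "p_basis \<alpha> \<eta> k x \<ge> 0"
      using assms by (intro p_basis_nonneg) auto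
    ultimately show ?thesis
      by (simp add: abs_mult mult_left_mono)
  qed
  from suminf_weighted_deviation_le [OF p_basis_sums_one p_basis_second_moment_about [OF assms(1-4)] this]
  have summable: "summable (\<lambda>k. p_basis \<alpha> \<eta> k x * f k)"
    and "\<bar>(\<Sum>k. p_basis \<alpha> \<eta> k x * f k) - \<Phi> x\<bar>
           \<le> \<epsilon> + C * (3 * x / \<eta> + (\<alpha> + 1) * (\<alpha> + 3) / \<eta> ^ 2 + (\<eta> * x + \<alpha> + 1) / (\<beta> * \<eta> ^ 2))"
    using assms by auto
  moreover have "R_op \<alpha> \<beta> \<eta> \<Phi> x = (\<Sum>k. p_basis \<alpha> \<eta> k x * f k)"
    using suminf_split_head [OF summable] unfolding R_op_def by (simp add: f_def)
  ultimately show ?thesis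
    by simp
qed

lemma R_op_deviation_le_inverse:
  assumes "\<alpha> > -1" and "\<beta> > 0" and "\<eta> \<ge> 1" and "x \<in> {0..M}" and "continuous_on {0..} \<Phi>"
    and "\<And>z. z \<ge> 0 \<Longrightarrow> \<bar>\<Phi> z\<bar> \<le> B"
    and "\<And>z. z \<ge> 0 \<Longrightarrow> \<bar>\<Phi> z - \<Phi> x\<bar> \<le> \<epsilon> + C * (z - x) ^ 2" and "C \<ge> 0"
  shows "\<bar>R_op \<alpha> \<beta> \<eta> \<Phi> x - \<Phi> x\<bar>
           \<le> \<epsilon> + C * (((3 + 1 / \<beta>) * M + (\<alpha> + 1) * (\<alpha> + 3) + (\<alpha> + 1) / \<beta>) / \<eta>)"
proof -
  have x: "0 \<le> x" "x \<le> M" and \<eta>: "\<eta> > 0"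
    using assms by auto
  have "\<eta> \<le> \<eta> ^ 2" and "0 < \<eta> ^ 2 * \<eta>"
    using assms by (simp_all add: power2_eq_square)
  then have square_le: "c / \<eta> ^ 2 \<le> c / \<eta>" if "c \<ge> 0" for c
    using that by (blast intro: divide_left_mono)
  have "(\<alpha> + 1) * (\<alpha> + 3) / \<eta> ^ 2 \<le> (\<alpha> + 1) * (\<alpha> + 3) / \<eta>"
    and "(\<alpha> + 1) / \<beta> / \<eta> ^ 2 \<le> (\<alpha> + 1) / \<beta> / \<eta>"
    using assms by (intro square_le; simp)+
  moreover have "3 * x / \<eta> \<le> 3 * M / \<eta>" and "x / \<beta> / \<eta> \<le> M / \<beta> / \<eta>"
    using assms x \<eta> by (simp_all add: divide_right_mono)
  moreover have "(\<eta> * x + \<alpha> + 1) / (\<beta> * \<eta> ^ 2) = x / \<beta> / \<eta> + (\<alpha> + 1) / \<beta> / \<eta> ^ 2"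
    using \<eta> assms(2) by (simp add: field_simps power2_eq_square)
  moreover have "((3 + 1 / \<beta>) * M + (\<alpha> + 1) * (\<alpha> + 3) + (\<alpha> + 1) / \<beta>) / \<eta>
      = 3 * M / \<eta> + M / \<beta> / \<eta> + (\<alpha> + 1) * (\<alpha> + 3) / \<eta> + (\<alpha> + 1) / \<beta> / \<eta>"
    by (simp add: add_divide_distrib distrib_right)
  ultimately have "3 * x / \<eta> + (\<alpha> + 1) * (\<alpha> + 3) / \<eta> ^ 2 + (\<eta> * x + \<alpha> + 1) / (\<beta> * \<eta> ^ 2)
      \<le> ((3 + 1 / \<beta>) * M + (\<alpha> + 1) * (\<alpha> + 3) + (\<alpha> + 1) / \<beta>) / \<eta>"
    by linarith
  then show ?thesis
    using R_op_deviation [OF assms(1,2) \<eta> x(1) assms(5-7)] \<open>C \<ge> 0\<close>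
    by (meson add_left_mono mult_left_mono order_trans)
qed

lemma quadratic_modulus_of_continuity:
  fixes f :: "real \<Rightarrow> real" and M :: real
  assumes "continuous_on {0..} f" and bounded: "\<And>z. z \<ge> 0 \<Longrightarrow> \<bar>f z\<bar> \<le> B" and "\<epsilon> > 0"
  obtains C :: real where "C \<ge> 0"
    and "\<And>x z. x \<in> {0..M} \<Longrightarrow> z \<ge> 0 \<Longrightarrow> \<bar>f z - f x\<bar> \<le> \<epsilon> + C * (z - x) ^ 2"
proof -
  have "uniformly_continuous_on {0..M + 1} f"
    using assms by (intro compact_uniformly_continuous) (auto intro: continuous_on_subset)
  then obtain \<delta> where "\<delta> > 0"
    and \<delta>: "\<And>x z. x \<in> {0..M + 1} \<Longrightarrow> z \<in> {0..M + 1} \<Longrightarrow> dist z x < \<delta> \<Longrightarrow> dist (f z) (f x) < \<epsilon>"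
    unfolding uniformly_continuous_on_def using \<open>\<epsilon> > 0\<close> by metis
  define d where "d = min \<delta> 1"
  have d: "d > 0" "d \<le> \<delta>" "d \<le> 1"
    using \<open>\<delta> > 0\<close> by (auto simp: d_def)
  show ?thesis
  proof
    show "2 * B / d ^ 2 \<ge> 0"
      using bounded [of 0] by simp
    fix x z :: real assume x: "x \<in> {0..M}" and z: "z \<ge> 0"
    show "\<bar>f z - f x\<bar> \<le> \<epsilon> + 2 * B / d ^ 2 * (z - x) ^ 2"
    proof (cases "\<bar>z - x\<bar> < d")
      case True
      then have "\<bar>f z - f x\<bar> < \<epsilon>"
        using \<delta> [of x z] x z d by (auto simp: dist_real_def)
      moreover have "2 * B / d ^ 2 * (z - x) ^ 2 \<ge> 0"
        using bounded [of 0] by simp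
      ultimately show ?thesis
        by linarith
    next
      case False
      then have "d ^ 2 \<le> \<bar>z - x\<bar> ^ 2"
        using d by (intro power_mono) auto
      then have "2 * B / d ^ 2 * d ^ 2 \<le> 2 * B / d ^ 2 * (z - x) ^ 2"
        using bounded [of 0] by (intro mult_left_mono) auto
      then have "2 * B \<le> 2 * B / d ^ 2 * (z - x) ^ 2"
        using d by simp
      moreover have "\<bar>f z - f x\<bar> \<le> 2 * B"
        using bounded [of z] bounded [of x] x z by simp
      ultimately show ?thesis
        using \<open>\<epsilon> > 0\<close> by linarith
    qed
  qed
qed

lemma R_op_eventually_close:
  fixes M :: real
  assumes "\<alpha> > -1" and "\<beta> > 0" and "continuous_on {0..} \<Phi>"
    and bounded: "\<And>z. z \<ge> 0 \<Longrightarrow> \<bar>\<Phi> z\<bar> \<le> B" and "e > 0"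
  shows "\<forall>\<^sub>F \<eta> in at_top. \<forall>x\<in>{0..M}. \<bar>R_op \<alpha> \<beta> \<eta> \<Phi> x - \<Phi> x\<bar> < e"
proof -
  obtain C where "C \<ge> 0"
    and dev: "\<And>x z. x \<in> {0..M} \<Longrightarrow> z \<ge> 0 \<Longrightarrow> \<bar>\<Phi> z - \<Phi> x\<bar> \<le> e / 2 + C * (z - x) ^ 2"
    using quadratic_modulus_of_continuity [OF assms(3) bounded, of "e / 2"] \<open>e > 0\<close> by auto
  define D where "D = (3 + 1 / \<beta>) * M + (\<alpha> + 1) * (\<alpha> + 3) + (\<alpha> + 1) / \<beta>"
  have "\<bar>R_op \<alpha> \<beta> \<eta> \<Phi> x - \<Phi> x\<bar> < e" if \<eta>: "\<eta> \<ge> max 1 (2 * C * D / e + 1)" and x: "x \<in> {0..M}"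
    for \<eta> x
  proof -
    have "\<bar>R_op \<alpha> \<beta> \<eta> \<Phi> x - \<Phi> x\<bar> \<le> e / 2 + C * (D / \<eta>)"
      unfolding D_def using \<eta> x bounded dev \<open>C \<ge> 0\<close>
      by (intro R_op_deviation_le_inverse assms(1-3)) auto
    moreover have "2 * C * D / e < \<eta>"
      using \<eta> by simp
    then have "2 * C * D < e * \<eta>"
      using \<open>e > 0\<close> by (simp add: divide_less_eq mult.commute)
    then have "C * (D / \<eta>) < e / 2"
      using \<eta> by (simp add: divide_less_eq algebra_simps)
    ultimately show ?thesis
      by linarith
  qed
  then show ?thesis
    unfolding eventually_at_top_linorder by blast
qed

theorem mainTheorem4:
  fixes \<alpha> \<beta> :: real and \<Phi> :: "real \<Rightarrow> real"
  assumes "\<alpha> > -1" and "\<beta> > 0"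
    and "continuous_on {0..} \<Phi>" and "bounded (\<Phi> ` {0..})"
  shows "\<forall>K. compact K \<and> K \<subseteq> {0..} \<longrightarrow>
           uniform_limit K (\<lambda>\<eta> x. R_op \<alpha> \<beta> \<eta> \<Phi> x) \<Phi> at_top"
proof (intro allI impI)
  fix K :: "real set" assume K: "compact K \<and> K \<subseteq> {0..}"
  then obtain M where "\<forall>x\<in>K. \<bar>x\<bar> \<le> M"
    by (meson bounded_real compact_imp_bounded)
  with K have M: "K \<subseteq> {0..M}"
    by (force simp: subset_eq)
  obtain B where B: "\<And>z. z \<ge> 0 \<Longrightarrow> \<bar>\<Phi> z\<bar> \<le> B"
    using assms(4) unfolding bounded_iff by auto
  show "uniform_limit K (\<lambda>\<eta> x. R_op \<alpha> \<beta> \<eta> \<Phi> x) \<Phi> at_top"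
  proof (rule uniform_limitI)
    fix e :: real assume "e > 0"
    with R_op_eventually_close [OF assms(1-3) B, of e M] M
    show "\<forall>\<^sub>F \<eta> in at_top. \<forall>x\<in>K. dist (R_op \<alpha> \<beta> \<eta> \<Phi> x) (\<Phi> x) < e"
      by (auto elim!: eventually_mono simp: dist_real_def)
  qed
qed

end
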